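(* Let $Q$ be a non-trivial free abelian pro-$p$ group of finite rank and let $Y$ be the set of all epimorphisms of pro-$p$ groups $\varphi:Q\to Q_1$, where $Q_1\cong\mathbb{Z}_p$. For $\varphi\in Y$ let $\hat\varphi:\mathbb{F}_p[[Q]]\to\mathbb{F}_p[[Q_1]]$ be the continuous ring homomorphism induced by $\varphi$. Then $\bigcap_{\varphi\in Y}\ker(\hat\varphi)=0$.
   Context: $\mathbb{F}_p[[Q]]$ denotes the completed group algebra of the pro-$p$ group $Q$ over $\mathbb{F}_p$. *)

theory Defs
  imports "HOL-Analysis.Analysis"
begin

text \<open>Concrete model: Q = Z_p^n (n >= 1), written as the inverse limit of the finite
quotients Q/Q^(p^k) = (Z/p^k)^n.\<close>

definition lvl :: "int \<Rightarrow> nat \<Rightarrow> nat \<Rightarrow> (nat \<Rightarrow> int) set" where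
  "lvl p n k = {x. (\<forall>i<n. 0 \<le> x i \<and> x i < p ^ k) \<and> (\<forall>i\<ge>n. x i = 0)}"

definition red :: "int \<Rightarrow> nat \<Rightarrow> (nat \<Rightarrow> int) \<Rightarrow> (nat \<Rightarrow> int)" where
  "red p k x = (\<lambda>i. x i mod p ^ k)"

text \<open>Completed group algebra F_p[[Z_p^n]] = inverse limit over k of the group algebras
F_p[(Z/p^k)^n]; an element is a compatible family of coefficient functions f k with values
in F_p = {0..<p}, compatibility being given by the maps induced by the reductions.\<close>
definition fpQ :: "int \<Rightarrow> nat \<Rightarrow> (nat \<Rightarrow> (nat \<Rightarrow> int) \<Rightarrow> int) set" where
  "fpQ p n = {f. \<forall>k.
      (\<forall>x. x \<notin> lvl p n k \<longrightarrow> f k x = 0) \<and>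
      (\<forall>x\<in>lvl p n k. 0 \<le> f k x \<and> f k x < p) \<and>
      (\<forall>y\<in>lvl p n k.
         f k y = (\<Sum>x\<in>{x\<in>lvl p n (Suc k). red p k x = y}. f (Suc k) x) mod p)}"

text \<open>Continuous epimorphisms Z_p^n -> Z_p, given as compatible families of surjective
group homomorphisms phi k : (Z/p^k)^n -> Z/p^k (Z/p^k represented by {0..<p^k}).\<close>
definition epis :: "int \<Rightarrow> nat \<Rightarrow> (nat \<Rightarrow> (nat \<Rightarrow> int) \<Rightarrow> int) set" where
  "epis p n = {\<phi>. \<forall>k.
      (\<forall>x. x \<notin> lvl p n k \<longrightarrow> \<phi> k x = 0) \<and>
      (\<forall>x\<in>lvl p n k. \<forall>y\<in>lvl p n k.
          \<phi> k (red p k (\<lambda>i. x i + y i)) = (\<phi> k x + \<phi> k y) mod p ^ k) \<and>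
      \<phi> k ` lvl p n k = {0..<p ^ k} \<and>
      (\<forall>x\<in>lvl p n (Suc k). \<phi> k (red p k x) = \<phi> (Suc k) x mod p ^ k)}"

text \<open>Induced continuous ring homomorphism F_p[[Z_p^n]] -> F_p[[Z_p]]: at level k it is
the linear extension of phi k on group algebras.\<close>
definition hat :: "int \<Rightarrow> nat \<Rightarrow> (nat \<Rightarrow> (nat \<Rightarrow> int) \<Rightarrow> int)
    \<Rightarrow> (nat \<Rightarrow> (nat \<Rightarrow> int) \<Rightarrow> int) \<Rightarrow> (nat \<Rightarrow> int \<Rightarrow> int)" where
  "hat p n \<phi> f = (\<lambda>k y. if y \<in> {0..<p ^ k}
       then (\<Sum>x\<in>{x\<in>lvl p n k. \<phi> k x = y}. f k x) mod p else 0)"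

definition ker_hat :: "int \<Rightarrow> nat \<Rightarrow> (nat \<Rightarrow> (nat \<Rightarrow> int) \<Rightarrow> int)
    \<Rightarrow> (nat \<Rightarrow> (nat \<Rightarrow> int) \<Rightarrow> int) set" where
  "ker_hat p n \<phi> = {f \<in> fpQ p n. hat p n \<phi> f = (\<lambda>k y. 0)}"

end

theory Submission
  imports Defs "HOL-Number_Theory.Cong"
begin

text \<open>Identify \<open>\<bbbF>\<^sub>p[[\<int>\<^sub>p\<^sup>n]]\<close> with \<open>\<bbbF>\<^sub>p[[T\<^sub>1,\<dots>,T\<^sub>n]]\<close> via \<open>g\<^sub>i \<mapsto> 1 + T\<^sub>i\<close>. The
  epimorphism \<open>x \<mapsto> \<Sum>i. p ^ (M * i) * x\<^sub>i\<close> onto \<open>\<int>\<^sub>p\<close> induces \<open>T\<^sub>i \<mapsto> (1 + T) ^ p ^ (M * i) - 1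
  = T ^ p ^ (M * i)\<close> in characteristic \<open>p\<close>, so the coefficient of \<open>T ^ N\<close> in the image of \<open>f\<close> is the
  sum of the coefficients \<open>f\<^sub>\<gamma>\<close> over all \<open>\<gamma>\<close> with \<open>\<Sum>i. \<gamma>\<^sub>i * p ^ (M * i) = N\<close>. If \<open>f \<noteq> 0\<close>, let \<open>\<alpha>\<close>
  be the colexicographically least exponent with \<open>f\<^sub>\<alpha> \<noteq> 0\<close>, choose \<open>p ^ M > \<alpha>\<^sub>i\<close> and
  \<open>N = \<Sum>i. \<alpha>\<^sub>i * p ^ (M * i)\<close>: every other \<open>\<gamma>\<close> with \<open>f\<^sub>\<gamma> \<noteq> 0\<close> is colexicographically larger
  and hence has larger weighted degree, so the image of \<open>f\<close> has coefficient \<open>f\<^sub>\<alpha> \<noteq> 0\<close> at \<open>T ^ N\<close>.\<close>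

lemma prime_dvd_prime_power_choose:
  assumes p: "prime (p::nat)" and j: "0 < j" "j < p ^ m"
  shows "p dvd (p ^ m choose j)"
proof (rule ccontr)
  assume "\<not> p dvd (p ^ m choose j)"
  hence "coprime (p ^ m) (p ^ m choose j)"
    using p by (simp add: prime_imp_coprime)
  moreover have "p ^ m dvd (p ^ m choose j) * j"
  proof -
    have "Suc (p ^ m - 1) = p ^ m" using p by (simp add: prime_gt_0_nat)
    hence "p ^ m * (p ^ m - 1 choose (j - 1)) = (p ^ m choose j) * j"
      using Suc_times_binomial_eq[of "p ^ m - 1" "j - 1"] j by simp
    thus ?thesis by (metis dvd_triv_left)
  qed
  ultimately have "p ^ m dvd j" by (simp add: coprime_dvd_mult_right_iff)
  thus False using j by (simp add: nat_dvd_not_less)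
qed

text \<open>Pascal's rule with step \<open>p ^ m\<close>: by Vandermonde's identity only the terms
  \<open>(p ^ m choose 0)\<close> and \<open>(p ^ m choose p ^ m)\<close> survive modulo \<open>p\<close>.\<close>
lemma binomial_add_prime_power_cong:
  assumes p: "prime (p::nat)"
  shows "[a + p ^ m choose j
      = (a choose j) + (if p ^ m \<le> j then a choose (j - p ^ m) else 0)] (mod p)"
proof -
  let ?q = "p ^ m"
  have p0: "p > 0" using p by (simp add: prime_gt_0_nat)
  have vandermonde: "a + ?q choose j = (\<Sum>k\<le>j. (?q choose k) * (a choose (j - k)))"
    by (simp add: vandermonde add.commute)
  have "[(\<Sum>k\<le>j. (?q choose k) * (a choose (j - k)))
      = (\<Sum>k\<le>j. (if k = 0 then a choose j else 0) + (if k = ?q then a choose (j - ?q) else 0))] (mod p)"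
  proof (rule cong_sum)
    fix k assume "k \<in> {..j}"
    consider "k = 0" | "0 < k" "k < ?q" | "k = ?q" | "?q < k" by linarith
    thus "[(?q choose k) * (a choose (j - k))
        = (if k = 0 then a choose j else 0) + (if k = ?q then a choose (j - ?q) else 0)] (mod p)"
    proof cases
      case 2
      hence "p dvd (?q choose k)" using prime_dvd_prime_power_choose[OF p] by blast
      thus ?thesis using 2 by (simp add: cong_0_iff)
    qed (use p0 in \<open>simp_all add: binomial_eq_0\<close>)
  qed
  moreover have "(\<Sum>k\<le>j. (if k = 0 then a choose j else 0) + (if k = ?q then a choose (j - ?q) else 0))
      = (a choose j) + (if ?q \<le> j then a choose (j - ?q) else 0)"
    by (simp add: sum.distrib)
  ultimately show ?thesis unfolding vandermonde by simp
qed

lemma binomial_add_prime_power_mult_cong: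
  assumes p: "prime (p::nat)" and j: "j < p ^ m"
  shows "[a + p ^ m * t choose j = a choose j] (mod p)"
proof (induction t)
  case (Suc t)
  have "a + p ^ m * Suc t = (a + p ^ m * t) + p ^ m" by simp
  moreover have "[(a + p ^ m * t) + p ^ m choose j = a + p ^ m * t choose j] (mod p)"
    using binomial_add_prime_power_cong[OF p, of "a + p ^ m * t" m j] j by simp
  ultimately show ?case using Suc.IH by (metis cong_trans)
qed simp

lemma binomial_prime_power_mult_cong:
  assumes p: "prime (p::nat)"
  shows "[p ^ m * a choose j = (if p ^ m dvd j then a choose (j div p ^ m) else 0)] (mod p)"
proof (induction a arbitrary: j)
  case 0
  have "p ^ m dvd j \<Longrightarrow> j div p ^ m = 0 \<longleftrightarrow> j = 0" using p by (auto simp: prime_gt_0_nat)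
  thus ?case by (cases "j = 0") (auto simp: binomial_eq_0)
next
  case (Suc a)
  let ?q = "p ^ m"
  have q: "?q > 0" using p by (simp add: prime_gt_0_nat)
  have "[?q * Suc a choose j
      = (?q * a choose j) + (if ?q \<le> j then ?q * a choose (j - ?q) else 0)] (mod p)"
    using binomial_add_prime_power_cong[OF p, of "?q * a" m j] by (simp add: add.commute)
  also have "[(?q * a choose j) + (if ?q \<le> j then ?q * a choose (j - ?q) else 0)
      = (if ?q dvd j then a choose (j div ?q) else 0)
      + (if ?q \<le> j then (if ?q dvd j - ?q then a choose ((j - ?q) div ?q) else 0) else 0)] (mod p)"
    by (intro cong_add Suc.IH) (simp add: Suc.IH)
  also have "(if ?q dvd j then a choose (j div ?q) else 0)
      + (if ?q \<le> j then (if ?q dvd j - ?q then a choose ((j - ?q) div ?q) else 0) else 0)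
      = (if ?q dvd j then Suc a choose (j div ?q) else 0)"
  proof (cases "?q dvd j")
    case True
    then obtain g where j: "j = ?q * g" by blast
    show ?thesis
    proof (cases g)
      case (Suc h)
      have "j - ?q = ?q * h" using j Suc by (simp add: algebra_simps)
      thus ?thesis using j Suc q by simp
    qed (use j p in \<open>simp add: prime_gt_0_nat\<close>)
  next
    case False
    hence "\<not> ?q dvd j - ?q" if "?q \<le> j" using that by (simp add: dvd_minus_self)
    thus ?thesis using False by auto
  qed
  finally show ?case .
qed

definition weighted_compositions :: "nat \<Rightarrow> (nat \<Rightarrow> nat) \<Rightarrow> nat \<Rightarrow> nat \<Rightarrow> (nat \<Rightarrow> nat) set" where
  "weighted_compositions p e n N = {\<gamma>. (\<forall>i\<ge>n. \<gamma> i = 0) \<and> (\<Sum>i<n. \<gamma> i * p ^ e i) = N}"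

lemma weighted_compositions_le:
  assumes "p > 0" "\<gamma> \<in> weighted_compositions p e n N" "i < n"
  shows "\<gamma> i \<le> N"
proof -
  have "\<gamma> i \<le> \<gamma> i * p ^ e i" using assms(1) by simp
  also have "\<dots> \<le> (\<Sum>i<n. \<gamma> i * p ^ e i)" by (rule member_le_sum) (use assms(3) in auto)
  finally show ?thesis using assms(2) by (simp add: weighted_compositions_def)
qed

lemma finite_weighted_compositions:
  assumes "p > 0"
  shows "finite (weighted_compositions p e n N)"
proof (rule finite_subset)
  show "weighted_compositions p e n N
      \<subseteq> {\<gamma>. \<forall>i. (i \<in> {..<n} \<longrightarrow> \<gamma> i \<in> {..N}) \<and> (i \<notin> {..<n} \<longrightarrow> \<gamma> i = 0)}"
    using weighted_compositions_le[OF assms] by (auto simp: weighted_compositions_def)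
  show "finite {\<gamma>. \<forall>i. (i \<in> {..<n} \<longrightarrow> \<gamma> i \<in> {..N}) \<and> (i \<notin> {..<n} \<longrightarrow> \<gamma> i = 0)}"
    by (rule finite_set_of_finite_funs) auto
qed

lemma sum_weighted_compositions_Suc_fibre:
  assumes "p > 0" "j \<le> N"
  shows "(\<Sum>\<gamma>\<in>{\<gamma>\<in>weighted_compositions p e (Suc n) N. p ^ e n * \<gamma> n = j}.
            (a n choose \<gamma> n) * (\<Prod>i<n. a i choose \<gamma> i))
     = (if p ^ e n dvd j
        then (a n choose (j div p ^ e n))
          * (\<Sum>\<delta>\<in>weighted_compositions p e n (N - j). \<Prod>i<n. a i choose \<delta> i)
        else 0)"
proof (cases "p ^ e n dvd j")
  case True
  define w where "w = p ^ e n"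
  have w: "w > 0" "w * (j div w) = j" using assms True by (simp_all add: w_def)
  have "(\<Sum>\<gamma>\<in>{\<gamma>\<in>weighted_compositions p e (Suc n) N. w * \<gamma> n = j}.
          (a n choose \<gamma> n) * (\<Prod>i<n. a i choose \<gamma> i))
      = (\<Sum>\<delta>\<in>weighted_compositions p e n (N - j). (a n choose (j div w)) * (\<Prod>i<n. a i choose \<delta> i))"
  proof (rule sum.reindex_bij_witness[where j = "\<lambda>\<gamma>. \<gamma>(n := 0)" and i = "\<lambda>\<delta>. \<delta>(n := j div w)"])
    fix \<gamma> assume g: "\<gamma> \<in> {\<gamma>\<in>weighted_compositions p e (Suc n) N. w * \<gamma> n = j}"
    hence gn: "\<gamma> n = j div w" using w by auto
    show "(\<gamma>(n := 0))(n := j div w) = \<gamma>" using gn by auto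
    have "\<gamma> n * w + (\<Sum>i<n. \<gamma> i * p ^ e i) = N" "w * \<gamma> n = j"
      using g by (simp_all add: weighted_compositions_def w_def)
    hence "(\<Sum>i<n. (\<gamma>(n := 0)) i * p ^ e i) = N - j" by (simp add: mult.commute)
    thus "\<gamma>(n := 0) \<in> weighted_compositions p e n (N - j)"
      using g by (auto simp: weighted_compositions_def)
    show "(a n choose (j div w)) * (\<Prod>i<n. a i choose (\<gamma>(n := 0)) i)
        = (a n choose \<gamma> n) * (\<Prod>i<n. a i choose \<gamma> i)"
      using gn by simp
  next
    fix \<delta> assume d: "\<delta> \<in> weighted_compositions p e n (N - j)"
    show "(\<delta>(n := j div w))(n := 0) = \<delta>" using d by (auto simp: weighted_compositions_def)
    have "(\<Sum>i<Suc n. (\<delta>(n := j div w)) i * p ^ e i) = (N - j) + (j div w) * w"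
      using d by (simp add: weighted_compositions_def w_def)
    also have "\<dots> = N" using w assms(2) by (simp add: mult.commute)
    finally show "\<delta>(n := j div w) \<in> {\<gamma>\<in>weighted_compositions p e (Suc n) N. w * \<gamma> n = j}"
      using d w by (auto simp: weighted_compositions_def)
  qed
  thus ?thesis using True by (simp add: w_def sum_distrib_left)
next
  case False
  hence empty: "{\<gamma>\<in>weighted_compositions p e (Suc n) N. p ^ e n * \<gamma> n = j} = {}" by auto
  show ?thesis unfolding empty using False by simp
qed

text \<open>Iterating Vandermonde's identity: modulo \<open>p\<close>, choosing \<open>N\<close> from a sum of blocks of
  sizes \<open>p ^ e i * a i\<close> only sees selections made of whole \<open>p ^ e i\<close>-blocks.\<close>
lemma binomial_weighted_sum_cong:
  assumes p: "prime (p::nat)"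
  shows "[(\<Sum>i<n. p ^ e i * a i) choose N
      = (\<Sum>\<gamma>\<in>weighted_compositions p e n N. \<Prod>i<n. a i choose \<gamma> i)] (mod p)"
proof (induction n arbitrary: N)
  case 0
  have "weighted_compositions p e 0 N = (if N = 0 then {\<lambda>_. 0} else {})"
    by (auto simp: weighted_compositions_def)
  thus ?case by (simp add: binomial_eq_0)
next
  case (Suc n)
  have p0: "p > 0" using p by (simp add: prime_gt_0_nat)
  define w where "w = p ^ e n"
  define C where "C = (\<lambda>M. \<Sum>\<delta>\<in>weighted_compositions p e n M. \<Prod>i<n. a i choose \<delta> i)"
  let ?T = "weighted_compositions p e (Suc n) N"
  have vandermonde: "(\<Sum>i<Suc n. p ^ e i * a i) choose N
      = (\<Sum>j\<le>N. (w * a n choose j) * ((\<Sum>i<n. p ^ e i * a i) choose (N - j)))"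
    using vandermonde[of "w * a n" "\<Sum>i<n. p ^ e i * a i" N] by (simp add: w_def add.commute)
  have blocks: "[(\<Sum>j\<le>N. (w * a n choose j) * ((\<Sum>i<n. p ^ e i * a i) choose (N - j)))
      = (\<Sum>j\<le>N. if w dvd j then (a n choose (j div w)) * C (N - j) else 0)] (mod p)"
  proof (rule cong_sum)
    fix j
    have "[(w * a n choose j) * ((\<Sum>i<n. p ^ e i * a i) choose (N - j))
        = (if w dvd j then a n choose (j div w) else 0) * C (N - j)] (mod p)"
      unfolding w_def C_def by (rule cong_mult[OF binomial_prime_power_mult_cong[OF p] Suc.IH])
    thus "[(w * a n choose j) * ((\<Sum>i<n. p ^ e i * a i) choose (N - j))
        = (if w dvd j then (a n choose (j div w)) * C (N - j) else 0)] (mod p)"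
      by (cases "w dvd j") simp_all
  qed
  have "(\<Sum>j\<le>N. if w dvd j then (a n choose (j div w)) * C (N - j) else 0)
      = (\<Sum>j\<le>N. \<Sum>\<gamma>\<in>{\<gamma>\<in>?T. w * \<gamma> n = j}. (a n choose \<gamma> n) * (\<Prod>i<n. a i choose \<gamma> i))"
    by (rule sum.cong) (simp_all add: sum_weighted_compositions_Suc_fibre[OF p0] w_def C_def)
  also have "\<dots> = (\<Sum>\<gamma>\<in>?T. (a n choose \<gamma> n) * (\<Prod>i<n. a i choose \<gamma> i))"
  proof -
    have "w * \<gamma> n \<le> N" if "\<gamma> \<in> ?T" for \<gamma>
    proof -
      have "w * \<gamma> n \<le> (\<Sum>i<Suc n. \<gamma> i * p ^ e i)" by (simp add: w_def mult.commute)
      thus ?thesis using that by (simp add: weighted_compositions_def)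
    qed
    thus ?thesis by (intro sum.group) (auto simp: finite_weighted_compositions[OF p0])
  qed
  also have "\<dots> = (\<Sum>\<gamma>\<in>?T. \<Prod>i<Suc n. a i choose \<gamma> i)"
    by (simp add: mult.commute)
  finally show ?case using blocks unfolding vandermonde by simp
qed

lemma finite_lvl: "finite (lvl p n k)"
proof (rule finite_subset)
  show "lvl p n k \<subseteq> {x. \<forall>i. (i \<in> {..<n} \<longrightarrow> x i \<in> {0..<p ^ k}) \<and> (i \<notin> {..<n} \<longrightarrow> x i = 0)}"
    by (auto simp: lvl_def)
  show "finite {x. \<forall>i. (i \<in> {..<n} \<longrightarrow> x i \<in> {0..<p ^ k}) \<and> (i \<notin> {..<n} \<longrightarrow> x i = (0::int))}"
    by (rule finite_set_of_finite_funs) auto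
qed

lemma red_in_lvl: "p > 0 \<Longrightarrow> \<forall>i\<ge>n. x i = 0 \<Longrightarrow> red p k x \<in> lvl p n k"
  by (auto simp: lvl_def red_def)

lemma zero_in_ker_hat: "p > 0 \<Longrightarrow> (\<lambda>k x. 0) \<in> ker_hat p n \<phi>"
  by (auto simp: ker_hat_def fpQ_def hat_def fun_eq_iff)

lemma sum_mult_mod_eq: "(\<Sum>i\<in>A. c i * (x i mod m)) mod m = (\<Sum>i\<in>A. c i * x i) mod (m::int)"
proof -
  have "[(\<Sum>i\<in>A. c i * (x i mod m)) = (\<Sum>i\<in>A. c i * x i)] (mod m)"
    by (intro cong_sum cong_mult cong_refl) (simp add: cong_def)
  thus ?thesis by (simp add: cong_def)
qed

definition power_weight_epi :: "int \<Rightarrow> nat \<Rightarrow> nat \<Rightarrow> nat \<Rightarrow> (nat \<Rightarrow> int) \<Rightarrow> int" where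
  "power_weight_epi p n M k x = (if x \<in> lvl p n k then (\<Sum>i<n. p ^ (M * i) * x i) mod p ^ k else 0)"

lemma power_weight_epi_range: "p > 0 \<Longrightarrow> power_weight_epi p n M k ` lvl p n k \<subseteq> {0..<p ^ k}"
  by (auto simp: power_weight_epi_def)

lemma power_weight_epi_in_epis:
  assumes p: "p > 0" and n: "n \<ge> 1"
  shows "power_weight_epi p n M \<in> epis p n"
  unfolding epis_def
proof (rule CollectI, rule allI, intro conjI)
  fix k
  let ?\<phi> = "power_weight_epi p n M"
  show "\<forall>x. x \<notin> lvl p n k \<longrightarrow> ?\<phi> k x = 0" by (simp add: power_weight_epi_def)
  show "\<forall>x\<in>lvl p n k. \<forall>y\<in>lvl p n k. ?\<phi> k (red p k (\<lambda>i. x i + y i)) = (?\<phi> k x + ?\<phi> k y) mod p ^ k"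
  proof (intro ballI)
    fix x y assume x: "x \<in> lvl p n k" and y: "y \<in> lvl p n k"
    have "red p k (\<lambda>i. x i + y i) \<in> lvl p n k"
      using x y p by (intro red_in_lvl) (auto simp: lvl_def)
    hence "?\<phi> k (red p k (\<lambda>i. x i + y i)) = (\<Sum>i<n. p ^ (M * i) * ((x i + y i) mod p ^ k)) mod p ^ k"
      by (simp add: power_weight_epi_def red_def)
    also have "\<dots> = ((\<Sum>i<n. p ^ (M * i) * x i) + (\<Sum>i<n. p ^ (M * i) * y i)) mod p ^ k"
      by (simp add: sum_mult_mod_eq distrib_left sum.distrib)
    also have "\<dots> = (?\<phi> k x + ?\<phi> k y) mod p ^ k"
      using x y by (simp add: power_weight_epi_def mod_add_eq)
    finally show "?\<phi> k (red p k (\<lambda>i. x i + y i)) = (?\<phi> k x + ?\<phi> k y) mod p ^ k" .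
  qed
  show "?\<phi> k ` lvl p n k = {0..<p ^ k}"
  proof
    show "?\<phi> k ` lvl p n k \<subseteq> {0..<p ^ k}" using p by (rule power_weight_epi_range)
    show "{0..<p ^ k} \<subseteq> ?\<phi> k ` lvl p n k"
    proof
      fix v assume v: "v \<in> {0..<p ^ k}"
      define x where "x = (\<lambda>i::nat. if i = 0 then v else 0)"
      have x: "x \<in> lvl p n k" using v n by (auto simp: lvl_def x_def)
      have "(\<Sum>i<n. p ^ (M * i) * x i) = (\<Sum>i<n. if i = 0 then v else 0)"
        by (rule sum.cong) (auto simp: x_def)
      hence "(\<Sum>i<n. p ^ (M * i) * x i) = v" using n by simp
      hence "?\<phi> k x = v" using x v by (simp add: power_weight_epi_def)
      thus "v \<in> ?\<phi> k ` lvl p n k" using x by force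
    qed
  qed
  show "\<forall>x\<in>lvl p n (Suc k). ?\<phi> k (red p k x) = ?\<phi> (Suc k) x mod p ^ k"
  proof
    fix x assume x: "x \<in> lvl p n (Suc k)"
    hence "red p k x \<in> lvl p n k" using p by (intro red_in_lvl) (auto simp: lvl_def)
    hence "?\<phi> k (red p k x) = (\<Sum>i<n. p ^ (M * i) * (x i mod p ^ k)) mod p ^ k"
      by (simp add: power_weight_epi_def red_def)
    also have "\<dots> = ((\<Sum>i<n. p ^ (M * i) * x i) mod p ^ Suc k) mod p ^ k"
      by (simp add: sum_mult_mod_eq mod_mod_cancel)
    also have "\<dots> = ?\<phi> (Suc k) x mod p ^ k" using x by (simp add: power_weight_epi_def)
    finally show "?\<phi> k (red p k x) = ?\<phi> (Suc k) x mod p ^ k" .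
  qed
qed

text \<open>The group element \<open>x\<close> becomes \<open>\<Prod>i. (1 + T\<^sub>i) ^ x\<^sub>i\<close>, whose coefficient at \<open>T\<^sup>\<alpha>\<close> is
  \<open>binom_monomial n \<alpha> x\<close>; thus \<open>moment p n f \<alpha>\<close> is the coefficient of \<open>T\<^sup>\<alpha>\<close> in \<open>f\<close>. The level-\<open>k\<close> sum only computes it
  once all \<open>\<alpha>\<^sub>i < p ^ k\<close> (see \<open>level_moment_eq_moment\<close>), hence the level \<open>\<Sum>i. \<alpha>\<^sub>i + 1\<close>.\<close>
definition binom_monomial :: "nat \<Rightarrow> (nat \<Rightarrow> nat) \<Rightarrow> (nat \<Rightarrow> int) \<Rightarrow> int" where
  "binom_monomial n \<alpha> x = (\<Prod>i<n. int (nat (x i) choose \<alpha> i))"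

definition level_moment :: "int \<Rightarrow> nat \<Rightarrow> (nat \<Rightarrow> (nat \<Rightarrow> int) \<Rightarrow> int) \<Rightarrow> nat \<Rightarrow> (nat \<Rightarrow> nat) \<Rightarrow> int" where
  "level_moment p n f k \<alpha> = (\<Sum>x\<in>lvl p n k. f k x * binom_monomial n \<alpha> x) mod p"

definition moment :: "int \<Rightarrow> nat \<Rightarrow> (nat \<Rightarrow> (nat \<Rightarrow> int) \<Rightarrow> int) \<Rightarrow> (nat \<Rightarrow> nat) \<Rightarrow> int" where
  "moment p n f \<alpha> = level_moment p n f ((\<Sum>i<n. \<alpha> i) + 1) \<alpha>"

lemma binomial_mod_prime_power_cong:
  assumes p: "prime p" and x: "0 \<le> x" and a: "a < nat p ^ k"
  shows "[int (nat (x mod p ^ k) choose a) = int (nat x choose a)] (mod p)"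
proof -
  have p0: "p > 0" using p by (simp add: prime_gt_0_int)
  have P: "prime (nat p)" using p prime_int_nat_transfer[of p] by blast
  have "int (nat (x mod p ^ k) + nat p ^ k * nat (x div p ^ k)) = x mod p ^ k + p ^ k * (x div p ^ k)"
    using p0 x by (simp add: pos_imp_zdiv_nonneg_iff)
  also have "\<dots> = x" by (rule mod_mult_div_eq)
  finally have "nat x = nat (x mod p ^ k) + nat p ^ k * nat (x div p ^ k)" by (metis nat_int)
  hence "[nat x choose a = nat (x mod p ^ k) choose a] (mod nat p)"
    by (simp only: binomial_add_prime_power_mult_cong[OF P a])
  hence "[int (nat x choose a) = int (nat (x mod p ^ k) choose a)] (mod int (nat p))"
    by (simp only: cong_int_iff)
  thus ?thesis using p0 by (simp add: cong_sym_eq)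
qed

lemma binom_monomial_red_cong:
  assumes p: "prime p" and x: "\<forall>i<n. 0 \<le> x i" and \<alpha>: "\<forall>i<n. \<alpha> i < nat p ^ k"
  shows "[binom_monomial n \<alpha> (red p k x) = binom_monomial n \<alpha> x] (mod p)"
  unfolding binom_monomial_def red_def
  using x \<alpha> by (intro cong_prod binomial_mod_prime_power_cong[OF p]) auto

lemma level_moment_Suc:
  assumes p: "prime p" and f: "f \<in> fpQ p n" and \<alpha>: "\<forall>i<n. \<alpha> i < nat p ^ k"
  shows "level_moment p n f (Suc k) \<alpha> = level_moment p n f k \<alpha>"
proof -
  have p0: "p > 0" using p by (simp add: prime_gt_0_int)
  have red: "red p k x \<in> lvl p n k" if "x \<in> lvl p n (Suc k)" for x
    by (intro red_in_lvl[OF p0]) (use that in \<open>simp add: lvl_def\<close>)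
  let ?B = "binom_monomial n \<alpha>"
  let ?fib = "\<lambda>y. {x\<in>lvl p n (Suc k). red p k x = y}"
  have "[(\<Sum>y\<in>lvl p n k. f k y * ?B y) = (\<Sum>y\<in>lvl p n k. (\<Sum>x\<in>?fib y. f (Suc k) x) * ?B y)] (mod p)"
  proof (rule cong_sum)
    fix y assume "y \<in> lvl p n k"
    hence "f k y = (\<Sum>x\<in>?fib y. f (Suc k) x) mod p" using f unfolding fpQ_def by blast
    hence "[f k y = (\<Sum>x\<in>?fib y. f (Suc k) x)] (mod p)" by (simp add: cong_def)
    thus "[f k y * ?B y = (\<Sum>x\<in>?fib y. f (Suc k) x) * ?B y] (mod p)" by (rule cong_scalar_right)
  qed
  also have "(\<Sum>y\<in>lvl p n k. (\<Sum>x\<in>?fib y. f (Suc k) x) * ?B y)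
      = (\<Sum>y\<in>lvl p n k. \<Sum>x\<in>?fib y. f (Suc k) x * ?B (red p k x))"
    by (rule sum.cong) (auto simp: sum_distrib_right)
  also have "\<dots> = (\<Sum>x\<in>lvl p n (Suc k). f (Suc k) x * ?B (red p k x))"
    using red by (intro sum.group finite_lvl) auto
  also have "[\<dots> = (\<Sum>x\<in>lvl p n (Suc k). f (Suc k) x * ?B x)] (mod p)"
    using \<alpha> by (intro cong_sum cong_mult cong_refl binom_monomial_red_cong[OF p]) (auto simp: lvl_def)
  finally show ?thesis unfolding level_moment_def cong_def by simp
qed

lemma level_moment_stable:
  assumes p: "prime p" and f: "f \<in> fpQ p n" and \<alpha>: "\<forall>i<n. \<alpha> i < nat p ^ k" and "k \<le> k'"
  shows "level_moment p n f k' \<alpha> = level_moment p n f k \<alpha>"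
  using \<open>k \<le> k'\<close>
proof (induction k' rule: dec_induct)
  case (step m)
  have "nat p ^ k \<le> nat p ^ m"
    using step(1) prime_gt_1_int[OF p] by (intro power_increasing) auto
  hence "\<forall>i<n. \<alpha> i < nat p ^ m" using \<alpha> by (meson less_le_trans)
  thus ?case using level_moment_Suc[OF p f] step(3) by simp
qed simp

lemma self_less_power: "(b::nat) \<ge> 2 \<Longrightarrow> m < b ^ m"
  using less_exp[of m] power_mono[of 2 b m] by linarith

lemma level_moment_eq_moment:
  assumes p: "prime p" and f: "f \<in> fpQ p n" and \<alpha>: "\<forall>i<n. \<alpha> i < nat p ^ k"
  shows "level_moment p n f k \<alpha> = moment p n f \<alpha>"
proof -
  define K where "K = (\<Sum>i<n. \<alpha> i) + 1"
  have "\<forall>i<n. \<alpha> i < nat p ^ K"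
  proof (intro allI impI)
    fix i assume "i < n"
    hence "\<alpha> i < K" unfolding K_def by (simp add: le_imp_less_Suc member_le_sum)
    also have "K < nat p ^ K" using prime_ge_2_int[OF p] by (intro self_less_power) simp
    finally show "\<alpha> i < nat p ^ K" .
  qed
  hence "level_moment p n f (max k K) \<alpha> = level_moment p n f K \<alpha>"
    by (rule level_moment_stable[OF p f]) simp
  moreover have "level_moment p n f (max k K) \<alpha> = level_moment p n f k \<alpha>"
    by (intro level_moment_stable[OF p f \<alpha>]) simp
  ultimately show ?thesis unfolding moment_def K_def by simp
qed

lemma binom_monomial_nonzero_imp_le:
  assumes "binom_monomial n (\<lambda>i. nat (y i)) x \<noteq> 0" and "0 \<le> x i" "0 \<le> y i" "i < n"
  shows "y i \<le> x i"
proof -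
  have "nat (x i) choose nat (y i) \<noteq> 0" using assms(1,4) by (auto simp: binom_monomial_def)
  thus ?thesis using assms(2,3) by (cases "y i = 0") auto
qed

text \<open>A group element of maximal degree \<open>\<Sum>i. x\<^sub>i\<close> in the support of \<open>f\<close> at some level
  contributes alone to the moment at its own exponent.\<close>
lemma ex_moment_nonzero:
  assumes p: "prime p" and f: "f \<in> fpQ p n" and nz: "f \<noteq> (\<lambda>k x. 0)"
  shows "\<exists>\<alpha>. (\<forall>i\<ge>n. \<alpha> i = 0) \<and> moment p n f \<alpha> \<noteq> 0"
proof -
  obtain k x0 where fx0: "f k x0 \<noteq> 0" using nz by (metis ext)
  define X where "X = {x\<in>lvl p n k. f k x \<noteq> 0}"
  have "x0 \<in> lvl p n k" using f fx0 unfolding fpQ_def by blast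
  hence x0: "x0 \<in> X" using fx0 by (simp add: X_def)
  define deg where "deg = (\<lambda>x::nat\<Rightarrow>int. \<Sum>i<n. x i)"
  have "finite X" unfolding X_def using finite_lvl by simp
  hence "Max (deg ` X) \<in> deg ` X" and max: "\<forall>x\<in>X. deg x \<le> Max (deg ` X)"
    using x0 by (auto intro: Max_in)
  then obtain xs where xs: "xs \<in> X" and "deg xs = Max (deg ` X)" by (metis imageE)
  with max have max: "\<forall>x\<in>X. deg x \<le> deg xs" by simp
  have xs_lvl: "xs \<in> lvl p n k" using xs by (simp add: X_def)
  define \<alpha> where "\<alpha> = (\<lambda>i. nat (xs i))"
  have single: "f k x * binom_monomial n \<alpha> x = 0" if x: "x \<in> lvl p n k" "x \<noteq> xs" for x
  proof (rule ccontr)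
    assume "f k x * binom_monomial n \<alpha> x \<noteq> 0"
    hence "x \<in> X" and B: "binom_monomial n (\<lambda>i. nat (xs i)) x \<noteq> 0"
      using x by (auto simp: X_def \<alpha>_def)
    have le: "\<forall>i\<in>{..<n}. xs i \<le> x i"
      using x xs_lvl by (auto simp: lvl_def intro: binom_monomial_nonzero_imp_le[OF B])
    have "\<exists>i<n. x i \<noteq> xs i"
    proof (rule ccontr)
      assume "\<not> (\<exists>i<n. x i \<noteq> xs i)"
      moreover have "\<forall>i\<ge>n. x i = xs i" using x xs_lvl by (simp add: lvl_def)
      ultimately have "x = xs" by (metis ext not_le)
      thus False using x by simp
    qed
    hence "\<exists>i\<in>{..<n}. xs i < x i" using le by force
    hence "deg xs < deg x" unfolding deg_def using le by (intro sum_strict_mono_ex1) auto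
    thus False using max \<open>x \<in> X\<close> by force
  qed
  have "(\<Sum>x\<in>lvl p n k. f k x * binom_monomial n \<alpha> x)
      = f k xs * binom_monomial n \<alpha> xs + (\<Sum>x\<in>lvl p n k - {xs}. f k x * binom_monomial n \<alpha> x)"
    by (rule sum.remove[OF finite_lvl xs_lvl])
  also have "(\<Sum>x\<in>lvl p n k - {xs}. f k x * binom_monomial n \<alpha> x) = 0"
    using single by (intro sum.neutral) auto
  also have "f k xs * binom_monomial n \<alpha> xs = f k xs" by (simp add: binom_monomial_def \<alpha>_def)
  finally have "level_moment p n f k \<alpha> = f k xs mod p" by (simp add: level_moment_def)
  also have "\<dots> = f k xs"
    using f xs_lvl unfolding fpQ_def by (blast intro: mod_pos_pos_trivial)
  finally have "level_moment p n f k \<alpha> = f k xs" .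
  moreover have "\<forall>i<n. \<alpha> i < nat p ^ k"
    using xs_lvl prime_gt_0_int[OF p] by (auto simp: \<alpha>_def lvl_def nat_less_iff)
  ultimately have "moment p n f \<alpha> \<noteq> 0"
    using level_moment_eq_moment[OF p f] xs by (auto simp: X_def)
  moreover have "\<forall>i\<ge>n. \<alpha> i = 0" using xs_lvl by (simp add: \<alpha>_def lvl_def)
  ultimately show ?thesis by blast
qed

definition colex_less :: "nat \<Rightarrow> (nat \<Rightarrow> nat) \<Rightarrow> (nat \<Rightarrow> nat) \<Rightarrow> bool" where
  "colex_less n a b \<longleftrightarrow> (\<exists>j<n. (\<forall>i. j < i \<and> i < n \<longrightarrow> a i = b i) \<and> a j < b j)"

lemma ex_colex_minimal:
  assumes "S \<noteq> {}"
  shows "\<exists>a\<in>S. \<forall>b\<in>S. (\<exists>i<n. b i \<noteq> a i) \<longrightarrow> colex_less n a b"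
  using assms
proof (induction n arbitrary: S)
  case (Suc n)
  define s where "s = (LEAST v. \<exists>a\<in>S. a n = v)"
  have "\<exists>a\<in>S. a n = s" unfolding s_def by (rule LeastI_ex) (use Suc.prems in auto)
  hence "{a\<in>S. a n = s} \<noteq> {}" by blast
  from Suc.IH[OF this] obtain a where a: "a \<in> S" "a n = s"
    and IH: "\<forall>b\<in>{a\<in>S. a n = s}. (\<exists>i<n. b i \<noteq> a i) \<longrightarrow> colex_less n a b"
    by blast
  have "colex_less (Suc n) a b" if b: "b \<in> S" "\<exists>i<Suc n. b i \<noteq> a i" for b
  proof (cases "b n = s")
    case False
    have "s \<le> b n" unfolding s_def by (rule Least_le) (use b in blast)
    hence "a n < b n" using False a by simp
    thus ?thesis unfolding colex_less_def by (intro exI[of _ n]) auto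
  next
    case True
    hence "colex_less n a b" using IH b a by (metis (mono_tags, lifting) less_Suc_eq mem_Collect_eq)
    thus ?thesis using True a unfolding colex_less_def by (metis less_Suc_eq)
  qed
  thus ?case using a by blast
qed auto

lemma digit_sum_less_power:
  fixes B :: nat
  assumes "\<forall>i<n. a i < B"
  shows "(\<Sum>i<n. a i * B ^ i) < B ^ n"
  using assms
proof (induction n)
  case (Suc n)
  have "(\<Sum>i<Suc n. a i * B ^ i) < (a n + 1) * B ^ n" using Suc by simp
  also have "\<dots> \<le> B * B ^ n" using Suc.prems by (intro mult_right_mono) auto
  finally show ?case by simp
qed simp

lemma digit_sum_less_if_colex_less:
  fixes B :: nat
  assumes "\<forall>i<n. a i < B" and "colex_less n a b"
  shows "(\<Sum>i<n. a i * B ^ i) < (\<Sum>i<n. b i * B ^ i)"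
  using assms
proof (induction n)
  case (Suc n)
  obtain j where j: "j < Suc n" "\<forall>i. j < i \<and> i < Suc n \<longrightarrow> a i = b i" "a j < b j"
    using Suc.prems(2) unfolding colex_less_def by blast
  show ?case
  proof (cases "j = n")
    case True
    have "(\<Sum>i<Suc n. a i * B ^ i) < (a n + 1) * B ^ n"
      using digit_sum_less_power Suc.prems(1) by simp
    also have "\<dots> \<le> b n * B ^ n" using j True by (intro mult_right_mono) auto
    also have "\<dots> \<le> (\<Sum>i<Suc n. b i * B ^ i)" by simp
    finally show ?thesis .
  next
    case False
    hence jn: "j < n" using j(1) by simp
    hence "colex_less n a b" unfolding colex_less_def using j by (intro exI[of _ j]) auto
    moreover have "a n = b n" using j jn by simp
    ultimately show ?thesis using Suc by simp
  qed
qed (simp add: colex_less_def)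

lemma hat_eq_0_imp_sum_cong:
  assumes \<phi>: "\<phi> k ` lvl p n k \<subseteq> {0..<p ^ k}" and hat: "hat p n \<phi> f = (\<lambda>k y. 0)"
  shows "[(\<Sum>x\<in>lvl p n k. f k x * g (\<phi> k x)) = 0] (mod p)"
proof -
  let ?fib = "\<lambda>y. {x\<in>lvl p n k. \<phi> k x = y}"
  have "(\<Sum>x\<in>lvl p n k. f k x * g (\<phi> k x)) = (\<Sum>y\<in>{0..<p ^ k}. \<Sum>x\<in>?fib y. f k x * g (\<phi> k x))"
    using \<phi> by (intro sum.group[symmetric] finite_lvl) auto
  also have "\<dots> = (\<Sum>y\<in>{0..<p ^ k}. (\<Sum>x\<in>?fib y. f k x) * g y)"
    by (rule sum.cong) (auto simp: sum_distrib_right)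
  also have "[\<dots> = (\<Sum>y\<in>{0..<p ^ k}. 0 * g y)] (mod p)"
  proof (rule cong_sum)
    fix y assume "y \<in> {0..<p ^ k}"
    hence "(\<Sum>x\<in>?fib y. f k x) mod p = 0" using fun_cong[OF fun_cong[OF hat, of k], of y]
      by (simp add: hat_def)
    thus "[(\<Sum>x\<in>?fib y. f k x) * g y = 0 * g y] (mod p)"
      by (intro cong_scalar_right) (simp add: cong_def)
  qed
  finally show ?thesis by simp
qed

lemma binom_power_weight_epi_cong:
  assumes p: "prime p" and x: "x \<in> lvl p n K" and N: "N < nat p ^ K"
  shows "[int (nat (power_weight_epi p n M K x) choose N)
      = (\<Sum>\<gamma>\<in>weighted_compositions (nat p) (\<lambda>i. M * i) n N. binom_monomial n \<gamma> x)] (mod p)"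
proof -
  have p0: "p > 0" using p by (simp add: prime_gt_0_int)
  have P: "prime (nat p)" using p prime_int_nat_transfer[of p] by blast
  have x0: "\<forall>i<n. 0 \<le> x i" using x by (simp add: lvl_def)
  define S where "S = (\<Sum>i<n. nat p ^ (M * i) * nat (x i))"
  have S: "int S = (\<Sum>i<n. p ^ (M * i) * x i)"
    unfolding S_def of_nat_sum using x0 p0 by (intro sum.cong) auto
  have "0 \<le> (\<Sum>i<n. p ^ (M * i) * x i)" unfolding S[symmetric] by simp
  hence "[int (nat (power_weight_epi p n M K x) choose N)
      = int (nat (\<Sum>i<n. p ^ (M * i) * x i) choose N)] (mod p)"
    using binomial_mod_prime_power_cong[OF p _ N] x by (simp add: power_weight_epi_def)
  moreover have "nat (\<Sum>i<n. p ^ (M * i) * x i) = S" unfolding S[symmetric] by simp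
  ultimately have "[int (nat (power_weight_epi p n M K x) choose N) = int (S choose N)] (mod p)"
    by simp
  also have "[int (S choose N)
      = int (\<Sum>\<gamma>\<in>weighted_compositions (nat p) (\<lambda>i. M * i) n N. \<Prod>i<n. nat (x i) choose \<gamma> i)] (mod p)"
  proof -
    have "[S choose N
        = (\<Sum>\<gamma>\<in>weighted_compositions (nat p) (\<lambda>i. M * i) n N. \<Prod>i<n. nat (x i) choose \<gamma> i)] (mod nat p)"
      unfolding S_def by (rule binomial_weighted_sum_cong[OF P])
    hence "[int (S choose N)
        = int (\<Sum>\<gamma>\<in>weighted_compositions (nat p) (\<lambda>i. M * i) n N. \<Prod>i<n. nat (x i) choose \<gamma> i)] (mod int (nat p))"
      by (simp only: cong_int_iff)
    moreover have "int (nat p) = p" using p0 by simp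
    ultimately show ?thesis by simp
  qed
  finally show ?thesis by (simp add: binom_monomial_def)
qed

lemma moment_sum_weighted_compositions_cong:
  assumes p: "prime p" and f: "f \<in> fpQ p n"
    and hat: "hat p n (power_weight_epi p n M) f = (\<lambda>k y. 0)"
  shows "[(\<Sum>\<gamma>\<in>weighted_compositions (nat p) (\<lambda>i. M * i) n N. moment p n f \<gamma>) = 0] (mod p)"
proof -
  have p0: "p > 0" using p by (simp add: prime_gt_0_int)
  define K where "K = N + 1"
  define T where "T = weighted_compositions (nat p) (\<lambda>i. M * i) n N"
  have "K < nat p ^ K" using prime_ge_2_int[OF p] by (intro self_less_power) simp
  hence N: "N < nat p ^ K" unfolding K_def by simp
  have "[0 = (\<Sum>x\<in>lvl p n K. f K x * int (nat (power_weight_epi p n M K x) choose N))] (mod p)"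
    using hat_eq_0_imp_sum_cong[OF power_weight_epi_range[OF p0] hat] by (simp add: cong_sym_eq)
  also have "[(\<Sum>x\<in>lvl p n K. f K x * int (nat (power_weight_epi p n M K x) choose N))
      = (\<Sum>x\<in>lvl p n K. f K x * (\<Sum>\<gamma>\<in>T. binom_monomial n \<gamma> x))] (mod p)"
    unfolding T_def
    by (intro cong_sum cong_scalar_left binom_power_weight_epi_cong[OF p _ N])
  also have "(\<Sum>x\<in>lvl p n K. f K x * (\<Sum>\<gamma>\<in>T. binom_monomial n \<gamma> x))
      = (\<Sum>\<gamma>\<in>T. \<Sum>x\<in>lvl p n K. f K x * binom_monomial n \<gamma> x)"
    by (simp add: sum_distrib_left sum.swap[of _ T])
  also have "[\<dots> = (\<Sum>\<gamma>\<in>T. level_moment p n f K \<gamma>)] (mod p)"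
    unfolding level_moment_def by (intro cong_sum) (simp add: cong_def)
  also have "(\<Sum>\<gamma>\<in>T. level_moment p n f K \<gamma>) = (\<Sum>\<gamma>\<in>T. moment p n f \<gamma>)"
  proof (rule sum.cong)
    fix \<gamma> assume "\<gamma> \<in> T"
    hence "\<forall>i<n. \<gamma> i < nat p ^ K"
      using weighted_compositions_le[of "nat p"] N p0 unfolding T_def
      by (meson le_less_trans zero_less_nat_eq)
    thus "level_moment p n f K \<gamma> = moment p n f \<gamma>" by (rule level_moment_eq_moment[OF p f])
  qed simp
  finally show ?thesis unfolding T_def by (simp add: cong_sym_eq)
qed

lemma sum_weighted_compositions_colex_minimal:
  fixes c :: "(nat \<Rightarrow> nat) \<Rightarrow> 'a::comm_monoid_add"
  assumes p: "p > 0" and \<alpha>: "\<forall>i\<ge>n. \<alpha> i = 0" and digits: "\<forall>i<n. \<alpha> i < p ^ M"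
    and least: "\<And>\<gamma>. (\<forall>i\<ge>n. \<gamma> i = 0) \<Longrightarrow> c \<gamma> \<noteq> 0 \<Longrightarrow> \<exists>i<n. \<gamma> i \<noteq> \<alpha> i \<Longrightarrow> colex_less n \<alpha> \<gamma>"
  shows "(\<Sum>\<gamma>\<in>weighted_compositions p (\<lambda>i. M * i) n (\<Sum>i<n. \<alpha> i * p ^ (M * i)). c \<gamma>) = c \<alpha>"
proof -
  define N where "N = (\<Sum>i<n. \<alpha> i * p ^ (M * i))"
  define T where "T = weighted_compositions p (\<lambda>i. M * i) n N"
  have weight: "p ^ (M * i) = (p ^ M) ^ i" for i by (simp add: power_mult)
  have "c \<gamma> = 0" if \<gamma>: "\<gamma> \<in> T - {\<alpha>}" for \<gamma>
  proof (rule ccontr)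
    assume "c \<gamma> \<noteq> 0"
    moreover have \<gamma>0: "\<forall>i\<ge>n. \<gamma> i = 0" using \<gamma> by (simp add: T_def weighted_compositions_def)
    moreover have "\<exists>i<n. \<gamma> i \<noteq> \<alpha> i"
    proof -
      obtain i where "\<gamma> i \<noteq> \<alpha> i" using \<gamma> by (auto simp: fun_eq_iff)
      thus ?thesis using \<gamma>0 \<alpha> by (cases "i < n") auto
    qed
    ultimately have "N < (\<Sum>i<n. \<gamma> i * (p ^ M) ^ i)"
      using least digits unfolding N_def weight by (blast intro: digit_sum_less_if_colex_less)
    thus False using \<gamma> by (simp add: T_def weighted_compositions_def weight)
  qed
  moreover have "\<alpha> \<in> T" using \<alpha> by (simp add: T_def N_def weighted_compositions_def)
  ultimately have "(\<Sum>\<gamma>\<in>T. c \<gamma>) = c \<alpha>"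
    using p by (intro sum.mono_neutral_right[of T "{\<alpha>}", simplified])
      (auto simp: T_def finite_weighted_compositions)
  thus ?thesis by (simp add: T_def N_def)
qed

lemma eq_zero_if_power_weight_hats_eq_zero:
  assumes p: "prime p" and f: "f \<in> fpQ p n"
    and hat: "\<And>M. hat p n (power_weight_epi p n M) f = (\<lambda>k y. 0)"
  shows "f = (\<lambda>k x. 0)"
proof (rule ccontr)
  assume "f \<noteq> (\<lambda>k x. 0)"
  define S where "S = {\<alpha>. (\<forall>i\<ge>n. \<alpha> i = 0) \<and> moment p n f \<alpha> \<noteq> 0}"
  have "S \<noteq> {}" using ex_moment_nonzero[OF p f \<open>f \<noteq> (\<lambda>k x. 0)\<close>] by (simp add: S_def)
  then obtain \<alpha> where \<alpha>: "\<alpha> \<in> S" and least: "\<forall>\<gamma>\<in>S. (\<exists>i<n. \<gamma> i \<noteq> \<alpha> i) \<longrightarrow> colex_less n \<alpha> \<gamma>"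
    using ex_colex_minimal by blast
  define M where "M = (\<Sum>i<n. \<alpha> i) + 1"
  have "\<forall>i<n. \<alpha> i < nat p ^ M"
  proof (intro allI impI)
    fix i assume "i < n"
    hence "\<alpha> i < M" unfolding M_def by (simp add: le_imp_less_Suc member_le_sum)
    also have "M < nat p ^ M" using prime_ge_2_int[OF p] by (intro self_less_power) simp
    finally show "\<alpha> i < nat p ^ M" .
  qed
  hence "(\<Sum>\<gamma>\<in>weighted_compositions (nat p) (\<lambda>i. M * i) n (\<Sum>i<n. \<alpha> i * nat p ^ (M * i)). moment p n f \<gamma>)
      = moment p n f \<alpha>"
    using \<alpha> least prime_gt_0_int[OF p]
    by (intro sum_weighted_compositions_colex_minimal) (auto simp: S_def)
  moreover have "[(\<Sum>\<gamma>\<in>weighted_compositions (nat p) (\<lambda>i. M * i) n (\<Sum>i<n. \<alpha> i * nat p ^ (M * i)).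
      moment p n f \<gamma>) = 0] (mod p)"
    by (rule moment_sum_weighted_compositions_cong[OF p f hat])
  ultimately have "moment p n f \<alpha> mod p = 0" by (simp add: cong_def)
  moreover have "moment p n f \<alpha> mod p = moment p n f \<alpha>" by (simp add: moment_def level_moment_def)
  ultimately show False using \<alpha> by (simp add: S_def)
qed

theorem lemma7p1:
  fixes p :: int and n :: nat
  assumes "prime p" and "n \<ge> 1"
  shows "(\<Inter>\<phi>\<in>epis p n. ker_hat p n \<phi>) = {(\<lambda>k x. 0)}"
proof -
  have p0: "p > 0" using \<open>prime p\<close> by (simp add: prime_gt_0_int)
  have "f = (\<lambda>k x. 0)" if f: "f \<in> (\<Inter>\<phi>\<in>epis p n. ker_hat p n \<phi>)" for f
  proof -
    have ker: "f \<in> ker_hat p n (power_weight_epi p n M)" for M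
      using f power_weight_epi_in_epis[OF p0 \<open>n \<ge> 1\<close>] by blast
    have "f \<in> fpQ p n" using ker[of 0] by (simp add: ker_hat_def)
    moreover have "hat p n (power_weight_epi p n M) f = (\<lambda>k y. 0)" for M
      using ker[of M] by (simp add: ker_hat_def)
    ultimately show ?thesis by (rule eq_zero_if_power_weight_hats_eq_zero[OF \<open>prime p\<close>])
  qed
  thus ?thesis using zero_in_ker_hat[OF p0] by blast
qed

end
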